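(* Let $A=\{A_i\}_{i=1}^\mathsf{p}\subset\mathcal{B}(\mathbb{C}^D)$ be the tensor of an injective MPS in canonical form, with transfer matrix $E=\sum_i\overline{A_i}\otimes A_i=|I\rangle\rangle\langle\langle\Lambda|+\tilde E$. Let $X,Y\in \mathcal{B}(\mathbb{C}^D)$ be such that the states $|\Psi_X\rangle=|\Psi(A,X,n)\rangle$ and $|\Psi_Y\rangle=|\Psi(A,Y,n)\rangle$ are normalized and orthogonal, and assume $n$ is sufficiently large compared to $D$. Then (i) $\|X\|_F=O(1)$ (and likewise $\|Y\|_F=O(1)$); (ii) $|\langle\langle\Lambda|(\overline{X}\otimes Y)|I\rangle\rangle|= O(\lambda_2^{n/2})$ and $|\langle\langle\Lambda|(\overline{Y}\otimes X)|I\rangle\rangle|= O(\lambda_2^{n/2})$, where the $O$-notation refers to $n\to\infty$.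
   Context: MPS: $|\Psi(A,X,n)\rangle=\sum_{i_1,\dots,i_n}\mathrm{tr}(A_{i_1}\cdots A_{i_n}X)|i_1\cdots i_n\rangle$. Vectorization: for $X=\sum_{\alpha,\beta}X_{\alpha\beta}|\alpha\rangle\langle\beta|$ set $|X\rangle\rangle=\sum_{\alpha,\beta}X_{\alpha\beta}|\beta\rangle\otimes|\alpha\rangle\in\mathbb{C}^D\otimes\mathbb{C}^D$, so $E|X\rangle\rangle=|\mathcal{E}(X)\rangle\rangle$ with $\mathcal{E}(X)=\sum_iA_iXA_i^\dagger$. Injective: $\mathcal{E}$ has spectral radius $1$ and is primitive (its fixed point is positive definite and $1$ is its only eigenvalue on the unit circle, with multiplicity one). Canonical form: the unique fixed point of $\mathcal{E}$ is the identity $I$, and the unique fixed point of $\mathcal{E}^\dagger(Y)=\sum_iA_i^\dagger YA_i$ is a positive definite diagonal matrix $\Lambda$ with $\mathrm{tr}\Lambda=1$; then $E=|I\rangle\rangle\langle\langle\Lambda|\oplus\tilde E$ is the Jordan decomposition, with $\tilde E$ collecting the Jordan blocks of eigenvalues of modulus $<1$. $\lambda_2<1$ denotes the largest modulus of an eigenvalue of $E$ other than the eigenvalue $1$. *)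

theory Defs
  imports "Jordan_Normal_Form.Spectral_Radius"
begin

definition mconj :: "complex mat \<Rightarrow> complex mat" where
  "mconj X = mat (dim_row X) (dim_col X) (\<lambda>(i,j). cnj (X $$ (i,j)))"

text \<open>Kronecker product; the basis vector |b> \<otimes> |a> of C^D \<otimes> C^D has index b * D + a.\<close>
definition kron :: "complex mat \<Rightarrow> complex mat \<Rightarrow> complex mat" where
  "kron P Q = mat (dim_row P * dim_row Q) (dim_col P * dim_col Q)
     (\<lambda>(r,c). P $$ (r div dim_row Q, c div dim_col Q) * Q $$ (r mod dim_row Q, c mod dim_col Q))"

text \<open>Vectorization |X>> = sum X_ab |b> \<otimes> |a> of a D x D matrix.\<close>
definition vectorize :: "complex mat \<Rightarrow> complex vec" where
  "vectorize X = vec (dim_row X * dim_row X) (\<lambda>k. X $$ (k mod dim_row X, k div dim_row X))"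

definition braket :: "complex vec \<Rightarrow> complex vec \<Rightarrow> complex" where
  "braket u v = (\<Sum>k<dim_vec u. cnj (u $ k) * v $ k)"

definition transfer_matrix :: "nat \<Rightarrow> nat \<Rightarrow> (nat \<Rightarrow> complex mat) \<Rightarrow> complex mat" where
  "transfer_matrix D p A = mat (D*D) (D*D) (\<lambda>rc. \<Sum>i<p. kron (mconj (A i)) (A i) $$ rc)"

definition cp_map :: "nat \<Rightarrow> nat \<Rightarrow> (nat \<Rightarrow> complex mat) \<Rightarrow> complex mat \<Rightarrow> complex mat" where
  "cp_map D p A X = mat D D (\<lambda>rc. \<Sum>i<p. (A i * X * mat_adjoint (A i)) $$ rc)"

definition cp_dual :: "nat \<Rightarrow> nat \<Rightarrow> (nat \<Rightarrow> complex mat) \<Rightarrow> complex mat \<Rightarrow> complex mat" where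
  "cp_dual D p A Y = mat D D (\<lambda>rc. \<Sum>i<p. (mat_adjoint (A i) * Y * A i) $$ rc)"

definition mtrace :: "complex mat \<Rightarrow> complex" where
  "mtrace X = (\<Sum>i<dim_row X. X $$ (i,i))"

definition pos_def_mat :: "nat \<Rightarrow> complex mat \<Rightarrow> bool" where
  "pos_def_mat D P \<longleftrightarrow> P \<in> carrier_mat D D \<and> mat_adjoint P = P \<and>
     (\<forall>v \<in> carrier_vec D. v \<noteq> 0\<^sub>v D \<longrightarrow> Re (braket v (P *\<^sub>v v)) > 0)"

text \<open>Injective MPS: the transfer map has spectral radius 1 and is primitive
  (positive definite fixed point, 1 the only eigenvalue on the unit circle, with
  (algebraic) multiplicity one).\<close>
definition injective_mps :: "nat \<Rightarrow> nat \<Rightarrow> (nat \<Rightarrow> complex mat) \<Rightarrow> bool" where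
  "injective_mps D p A \<longleftrightarrow>
     (let E = transfer_matrix D p A in
       spectral_radius E = 1 \<and>
       (\<exists>P. pos_def_mat D P \<and> cp_map D p A P = P) \<and>
       (\<forall>\<mu>. eigenvalue E \<mu> \<and> cmod \<mu> = 1 \<longrightarrow> \<mu> = 1) \<and>
       order 1 (char_poly E) = 1)"

text \<open>Canonical form: the fixed point of E is the identity (unique up to scaling by the
  multiplicity-one condition), and Lam is a positive definite diagonal fixed point of
  E^dagger with trace 1.\<close>
definition canonical_form :: "nat \<Rightarrow> nat \<Rightarrow> (nat \<Rightarrow> complex mat) \<Rightarrow> complex mat \<Rightarrow> bool" where
  "canonical_form D p A Lam \<longleftrightarrow>
     cp_map D p A (1\<^sub>m D) = 1\<^sub>m D \<and>
     Lam \<in> carrier_mat D D \<and> diagonal_mat Lam \<and> pos_def_mat D Lam \<and> mtrace Lam = 1 \<and>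
     cp_dual D p A Lam = Lam"

definition lambda2 :: "complex mat \<Rightarrow> real" where
  "lambda2 E = Sup (insert 0 (cmod ` {\<mu>. eigenvalue E \<mu> \<and> \<mu> \<noteq> 1}))"

text \<open>Coefficient tr(A_{i1} ... A_{in} X) of |i1 ... in> in |Psi(A,X,n)>.\<close>
definition mps_coeff :: "(nat \<Rightarrow> complex mat) \<Rightarrow> complex mat \<Rightarrow> nat list \<Rightarrow> complex" where
  "mps_coeff A X w = mtrace (foldr (\<lambda>i M. A i * M) w X)"

definition words :: "nat \<Rightarrow> nat \<Rightarrow> nat list set" where
  "words p n = {w. length w = n \<and> set w \<subseteq> {..<p}}"

definition mps_inner :: "nat \<Rightarrow> (nat \<Rightarrow> complex mat) \<Rightarrow> nat \<Rightarrow> complex mat \<Rightarrow> complex mat \<Rightarrow> complex" where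
  "mps_inner p A n X Y = (\<Sum>w\<in>words p n. cnj (mps_coeff A X w) * mps_coeff A Y w)"

definition frob_norm :: "complex mat \<Rightarrow> real" where
  "frob_norm X = sqrt (\<Sum>i<dim_row X. \<Sum>j<dim_col X. (cmod (X $$ (i,j)))\<^sup>2)"

end

theory Submission
  imports Defs "Jordan_Normal_Form.Jordan_Normal_Form_Uniqueness"
begin

(* The spectral projection of the transfer matrix E onto its eigenvalue 1 is P = |I>><<Lam|, and
   <Psi_X|Psi_Y> = tr (E^n (conj X (x) Y)) = <<Lam| conj X (x) Y |I>> + tr ((E - P)^n (conj X (x) Y)).
   As 1 is a simple eigenvalue, every nonzero eigenvalue of E - P is an eigenvalue of E other than 1,
   so the entries of (E - P)^n decay like lambda2^(n/2) and the remainder is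
   O(lambda2^(n/2) |X|_F |Y|_F).  For Y = X the leading term is sum_a Lam_aa sum_k |X_ak|^2, which is
   at least min_a Lam_aa |X|_F^2, so normalization bounds |X|_F; for orthogonal X and Y the leading
   term equals minus the remainder. *)

section \<open>Matrix algebra\<close>

lemma sum_pair_index:
  fixes g :: "nat \<Rightarrow> 'a::comm_monoid_add"
  shows "(\<Sum>k<D*D. g k) = (\<Sum>e<D. \<Sum>f<D. g (e*D+f))"
proof -
  have "(\<Sum>k<D*D. g k) = (\<Sum>e<D. sum g {e*D..<e*D+D})"
    by (rule sum.nat_group[symmetric])
  also have "\<dots> = (\<Sum>e<D. \<Sum>f<D. g (e*D+f))"
  proof (rule sum.cong[OF refl])
    fix e
    have "sum g {0+e*D..<D+e*D} = (\<Sum>f=0..<D. g (f+e*D))" by (rule sum.shift_bounds_nat_ivl)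
    then show "sum g {e*D..<e*D+D} = (\<Sum>f<D. g (e*D+f))" by (simp add: lessThan_atLeast0 add.commute)
  qed
  finally show ?thesis .
qed

lemma index_div_mod_less:
  fixes r D :: nat assumes "r < D*D"
  shows "r div D < D" "r mod D < D"
proof -
  have "D > 0" using assms by (cases D) auto
  then show "r mod D < D" by simp
  show "r div D < D" using assms by (simp add: less_mult_imp_div_less)
qed

lemma pair_index_less:
  fixes e f D :: nat assumes "e < D" "f < D" shows "e*D+f < D*D"
proof -
  have "e*D+f < (e+1)*D" using assms by simp
  also have "\<dots> \<le> D*D" using assms by (intro mult_right_mono) auto
  finally show ?thesis .
qed

lemma pair_index_div_mod:
  fixes e f D :: nat assumes "f < D" shows "(e*D+f) div D = e" "(e*D+f) mod D = f"
  using assms by auto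

lemma mat_vec_entry:
  assumes "M \<in> carrier_mat n n" "dim_vec v = n" "r < n"
  shows "(M *\<^sub>v v) $ r = (\<Sum>k<n. M $$ (r,k) * v $ k)"
  using assms by (simp add: scalar_prod_def lessThan_atLeast0)

lemma mult_mat_entry:
  assumes "M \<in> carrier_mat n n" "K \<in> carrier_mat n n" "r < n" "c < n"
  shows "(M * K) $$ (r,c) = (\<Sum>k<n. M $$ (r,k) * K $$ (k,c))"
  using assms by (simp add: scalar_prod_def lessThan_atLeast0)

lemma mult3_mat_entry:
  assumes "A \<in> carrier_mat D D" "X \<in> carrier_mat D D" "B \<in> carrier_mat D D" "a < D" "b < D"
  shows "(A * X * B) $$ (a,b) = (\<Sum>e<D. \<Sum>f<D. A $$ (a,f) * X $$ (f,e) * B $$ (e,b))"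
proof -
  have "(A * X * B) $$ (a,b) = (\<Sum>e<D. (A * X) $$ (a,e) * B $$ (e,b))"
    using assms by (intro mult_mat_entry) auto
  also have "\<dots> = (\<Sum>e<D. \<Sum>f<D. A $$ (a,f) * X $$ (f,e) * B $$ (e,b))"
    using assms by (intro sum.cong refl) (simp add: scalar_prod_def lessThan_atLeast0 sum_distrib_right)
  finally show ?thesis .
qed

lemma mtrace_mult:
  assumes M: "M \<in> carrier_mat n n" and K: "K \<in> carrier_mat n n"
  shows "mtrace (M * K) = (\<Sum>r<n. \<Sum>s<n. M $$ (r,s) * K $$ (s,r))"
  using assms by (auto simp: mtrace_def scalar_prod_def lessThan_atLeast0 intro!: sum.cong)

lemma mtrace_minus:
  "M1 \<in> carrier_mat n n \<Longrightarrow> M2 \<in> carrier_mat n n \<Longrightarrow> mtrace (M1 - M2) = mtrace M1 - mtrace M2"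
  by (simp add: mtrace_def sum_subtractf)

lemma mat_adjoint_entry:
  "i < dim_col M \<Longrightarrow> j < dim_row M \<Longrightarrow> mat_adjoint (M :: complex mat) $$ (i,j) = cnj (M $$ (j,i))"
  unfolding mat_adjoint_def by (simp add: mat_of_rows_def)

lemma mat_adjoint_dim [simp]:
  "dim_row (mat_adjoint M) = dim_col M" "dim_col (mat_adjoint M) = dim_row M"
  unfolding mat_adjoint_def by auto

lemma mat_adjoint_carrier: "M \<in> carrier_mat n n \<Longrightarrow> mat_adjoint (M :: complex mat) \<in> carrier_mat n n"
  unfolding mat_adjoint_def by auto

lemma mat_adjoint_adjoint: "M \<in> carrier_mat n n \<Longrightarrow> mat_adjoint (mat_adjoint (M :: complex mat)) = M"
  by (intro eq_matI) (auto simp: mat_adjoint_entry)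

lemma mult_cnj_eq_cmod_square: "z * cnj z = (complex_of_real (cmod z))\<^sup>2"
  by (metis complex_norm_square of_real_power)

lemma pos_def_mat_diag_pos:
  assumes pd: "pos_def_mat D L" and d: "d < D"
  shows "0 < Re (L $$ (d,d))"
proof -
  have L: "L \<in> carrier_mat D D" using pd unfolding pos_def_mat_def by auto
  have u: "unit_vec D d \<in> carrier_vec D" "unit_vec D d \<noteq> 0\<^sub>v D"
    using d by (auto simp: unit_vec_def vec_eq_iff)
  have "braket (unit_vec D d) (L *\<^sub>v unit_vec D d) = L $$ (d,d)"
    unfolding braket_def using L d
    by (simp add: sum.delta' if_distrib[of cnj] if_distrib[of "\<lambda>x. x * _"] cong: if_cong)
  then show ?thesis using pd u unfolding pos_def_mat_def by auto
qed

lemma power_mult_fixed: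
  fixes E P :: "complex mat"
  assumes E: "E \<in> carrier_mat m m" and P: "P \<in> carrier_mat m m" and EP: "E * P = P"
  shows "E ^\<^sub>m n * P = P"
proof (induction n)
  case (Suc n)
  have "E ^\<^sub>m Suc n * P = E ^\<^sub>m n * (E * P)" using E P by (simp add: assoc_mult_mat[of _ m m])
  then show ?case using Suc EP by simp
qed (use E P in simp)

lemma power_minus_idempotent:
  fixes E P :: "complex mat"
  assumes E: "E \<in> carrier_mat m m" and P: "P \<in> carrier_mat m m"
    and EP: "E * P = P" and PE: "P * E = P" and PP: "P * P = P" and n: "n \<ge> 1"
  shows "(E - P) ^\<^sub>m n = E ^\<^sub>m n - P"
  using n
proof (induction n rule: dec_induct)
  case base
  show ?case using E P by simp
next
  case (step n)
  have En: "E ^\<^sub>m n \<in> carrier_mat m m" using E by simp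
  have "(E - P) ^\<^sub>m Suc n = (E ^\<^sub>m n - P) * (E - P)" using step.IH by simp
  also have "\<dots> = (E ^\<^sub>m n - P) * E - (E ^\<^sub>m n - P) * P"
    by (rule mult_minus_distrib_mat[of _ m m]) (use En E P in auto)
  also have "\<dots> = (E ^\<^sub>m n * E - P * E) - (E ^\<^sub>m n * P - P * P)"
    by (simp only: minus_mult_distrib_mat[OF En P E] minus_mult_distrib_mat[OF En P P])
  also have "\<dots> = E ^\<^sub>m Suc n - P"
    using E P PE PP power_mult_fixed[OF E P EP] by (intro eq_matI) auto
  finally show ?case .
qed

section \<open>Outer products\<close>

definition ketbra :: "complex vec \<Rightarrow> complex vec \<Rightarrow> complex mat" where
  "ketbra u v = mat (dim_vec u) (dim_vec v) (\<lambda>(r,c). u $ r * cnj (v $ c))"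

lemma ketbra_carrier: "u \<in> carrier_vec n \<Longrightarrow> v \<in> carrier_vec m \<Longrightarrow> ketbra u v \<in> carrier_mat n m"
  unfolding ketbra_def by auto

lemma ketbra_entry: "r < dim_vec u \<Longrightarrow> c < dim_vec v \<Longrightarrow> ketbra u v $$ (r,c) = u $ r * cnj (v $ c)"
  unfolding ketbra_def by simp

lemma mult_ketbra:
  assumes "M \<in> carrier_mat n n" "u \<in> carrier_vec n"
  shows "M * ketbra u v = ketbra (M *\<^sub>v u) v"
  using assms by (intro eq_matI) (auto simp: ketbra_def scalar_prod_def sum_distrib_left mult_ac)

lemma ketbra_mult:
  assumes M: "M \<in> carrier_mat n n" and v: "v \<in> carrier_vec n"
  shows "ketbra u v * M = ketbra u (mat_adjoint M *\<^sub>v v)"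
proof (rule eq_matI)
  have MH: "mat_adjoint M \<in> carrier_mat n n" by (rule mat_adjoint_carrier[OF M])
  fix r c assume r: "r < dim_row (ketbra u (mat_adjoint M *\<^sub>v v))"
    and c: "c < dim_col (ketbra u (mat_adjoint M *\<^sub>v v))"
  then have r: "r < dim_vec u" and c: "c < n" using MH by (auto simp: ketbra_def)
  have "(ketbra u v * M) $$ (r,c) = (\<Sum>k<n. u $ r * cnj (v $ k) * M $$ (k,c))"
    using r c M v by (simp add: ketbra_def scalar_prod_def lessThan_atLeast0)
  also have "\<dots> = ketbra u (mat_adjoint M *\<^sub>v v) $$ (r,c)"
    using r c M v MH
    by (simp add: ketbra_entry scalar_prod_def lessThan_atLeast0 mat_adjoint_entry sum_distrib_left mult_ac)
  finally show "(ketbra u v * M) $$ (r,c) = ketbra u (mat_adjoint M *\<^sub>v v) $$ (r,c)" .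
qed (use M v in \<open>auto simp: ketbra_def\<close>)

lemma ketbra_mult_ketbra:
  assumes "v \<in> carrier_vec n" "x \<in> carrier_vec n"
  shows "ketbra u v * ketbra x y = braket v x \<cdot>\<^sub>m ketbra u y"
  using assms by (intro eq_matI)
    (auto simp: ketbra_def braket_def scalar_prod_def lessThan_atLeast0 sum_distrib_left mult_ac)

lemma ketbra_mult_vec:
  assumes "w \<in> carrier_vec n" "v \<in> carrier_vec n"
  shows "ketbra u w *\<^sub>v v = braket w v \<cdot>\<^sub>v u"
  using assms by (intro eq_vecI)
    (auto simp: ketbra_def braket_def scalar_prod_def lessThan_atLeast0 sum_distrib_left mult_ac)

lemma mtrace_ketbra_mult:
  assumes u: "u \<in> carrier_vec n" and v: "v \<in> carrier_vec n" and K: "K \<in> carrier_mat n n"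
  shows "mtrace (ketbra u v * K) = braket v (K *\<^sub>v u)"
proof -
  have "mtrace (ketbra u v * K) = (\<Sum>r<n. \<Sum>s<n. u $ r * cnj (v $ s) * K $$ (s,r))"
    using u v by (simp add: mtrace_mult[OF ketbra_carrier[OF u v] K] ketbra_entry)
  also have "\<dots> = (\<Sum>s<n. \<Sum>r<n. u $ r * cnj (v $ s) * K $$ (s,r))" by (rule sum.swap)
  also have "\<dots> = braket v (K *\<^sub>v u)"
    using u v K by (simp add: braket_def scalar_prod_def lessThan_atLeast0 sum_distrib_left mult_ac)
  finally show ?thesis .
qed

section \<open>Kronecker products and vectorization\<close>

lemma kron_mconj_carrier:
  "X \<in> carrier_mat D D \<Longrightarrow> Y \<in> carrier_mat D D \<Longrightarrow> kron (mconj X) Y \<in> carrier_mat (D*D) (D*D)"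
  unfolding kron_def mconj_def by auto

lemma kron_mconj_entry:
  assumes "X \<in> carrier_mat D D" "Y \<in> carrier_mat D D" "r < D*D" "c < D*D"
  shows "kron (mconj X) Y $$ (r,c) = cnj (X $$ (r div D, c div D)) * Y $$ (r mod D, c mod D)"
  using assms index_div_mod_less[OF assms(3)] index_div_mod_less[OF assms(4)]
  unfolding kron_def mconj_def by auto

lemma dim_vectorize [simp]: "dim_vec (vectorize X) = dim_row X * dim_row X"
  unfolding vectorize_def by simp

lemma vectorize_carrier: "X \<in> carrier_mat D D \<Longrightarrow> vectorize X \<in> carrier_vec (D*D)"
  unfolding vectorize_def by auto

lemma vectorize_entry:
  "X \<in> carrier_mat D D \<Longrightarrow> k < D*D \<Longrightarrow> vectorize X $ k = X $$ (k mod D, k div D)"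
  unfolding vectorize_def by auto

lemma kron_mconj_mult_vectorize:
  assumes B: "B \<in> carrier_mat D D" and A: "A \<in> carrier_mat D D" and X: "X \<in> carrier_mat D D"
  shows "kron (mconj B) A *\<^sub>v vectorize X = vectorize (A * X * mat_adjoint B)"
proof (rule eq_vecI)
  have BH: "mat_adjoint B \<in> carrier_mat D D" by (rule mat_adjoint_carrier[OF B])
  show "dim_vec (kron (mconj B) A *\<^sub>v vectorize X) = dim_vec (vectorize (A * X * mat_adjoint B))"
    using A B by (simp add: kron_def mconj_def)
  fix r assume "r < dim_vec (vectorize (A * X * mat_adjoint B))"
  then have r: "r < D*D" using A by simp
  note rr = index_div_mod_less[OF r]
  have "(kron (mconj B) A *\<^sub>v vectorize X) $ r = (\<Sum>k<D*D. kron (mconj B) A $$ (r,k) * vectorize X $ k)"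
    by (rule mat_vec_entry[OF kron_mconj_carrier[OF B A]]) (use X r in auto)
  also have "\<dots> = (\<Sum>e<D. \<Sum>f<D. kron (mconj B) A $$ (r, e*D+f) * vectorize X $ (e*D+f))"
    by (rule sum_pair_index)
  also have "\<dots> = (\<Sum>e<D. \<Sum>f<D. A $$ (r mod D, f) * X $$ (f,e) * mat_adjoint B $$ (e, r div D))"
    using r rr B by (intro sum.cong refl)
      (simp add: kron_mconj_entry[OF B A] vectorize_entry[OF X] pair_index_less pair_index_div_mod
        mat_adjoint_entry mult_ac)
  also have "\<dots> = (A * X * mat_adjoint B) $$ (r mod D, r div D)"
    by (rule mult3_mat_entry[symmetric]) (use A X BH rr in auto)
  also have "\<dots> = vectorize (A * X * mat_adjoint B) $ r"
    using A X BH by (intro vectorize_entry[symmetric] r) simp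
  finally show "(kron (mconj B) A *\<^sub>v vectorize X) $ r = vectorize (A * X * mat_adjoint B) $ r" .
qed

lemma kron_mconj_mult_kron_mconj:
  assumes A: "A \<in> carrier_mat D D" and B: "B \<in> carrier_mat D D"
    and X: "X \<in> carrier_mat D D" and Y: "Y \<in> carrier_mat D D"
  shows "kron (mconj A) B * kron (mconj X) Y = kron (mconj (A * X)) (B * Y)"
proof (rule eq_matI)
  fix r c assume "r < dim_row (kron (mconj (A * X)) (B * Y))" "c < dim_col (kron (mconj (A * X)) (B * Y))"
  then have r: "r < D*D" and c: "c < D*D" using A B X Y by (auto simp: kron_def mconj_def)
  note rr = index_div_mod_less[OF r] and cc = index_div_mod_less[OF c]
  have "(kron (mconj A) B * kron (mconj X) Y) $$ (r,c)
      = (\<Sum>k<D*D. kron (mconj A) B $$ (r,k) * kron (mconj X) Y $$ (k,c))"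
    by (rule mult_mat_entry[OF kron_mconj_carrier[OF A B] kron_mconj_carrier[OF X Y] r c])
  also have "\<dots> = (\<Sum>e<D. \<Sum>f<D. kron (mconj A) B $$ (r,e*D+f) * kron (mconj X) Y $$ (e*D+f,c))"
    by (rule sum_pair_index)
  also have "\<dots> = (\<Sum>e<D. \<Sum>f<D. cnj (A $$ (r div D, e) * X $$ (e, c div D)) * (B $$ (r mod D, f) * Y $$ (f, c mod D)))"
    using r c by (intro sum.cong refl)
      (simp add: kron_mconj_entry[OF A B] kron_mconj_entry[OF X Y] pair_index_less pair_index_div_mod mult_ac)
  also have "\<dots> = kron (mconj (A * X)) (B * Y) $$ (r,c)"
    using r c rr cc A B X Y
    by (simp add: kron_mconj_entry[of _ D] scalar_prod_def lessThan_atLeast0 sum_product)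
  finally show "(kron (mconj A) B * kron (mconj X) Y) $$ (r,c) = kron (mconj (A * X)) (B * Y) $$ (r,c)" .
qed (use A B X Y in \<open>auto simp: kron_def mconj_def\<close>)

lemma mtrace_kron_mconj:
  assumes X: "X \<in> carrier_mat D D" and Y: "Y \<in> carrier_mat D D"
  shows "mtrace (kron (mconj X) Y) = cnj (mtrace X) * mtrace Y"
proof -
  have "mtrace (kron (mconj X) Y) = (\<Sum>k<D*D. kron (mconj X) Y $$ (k,k))"
    using X Y by (simp add: mtrace_def kron_def mconj_def)
  also have "\<dots> = (\<Sum>e<D. \<Sum>f<D. kron (mconj X) Y $$ (e*D+f, e*D+f))" by (rule sum_pair_index)
  also have "\<dots> = (\<Sum>e<D. \<Sum>f<D. cnj (X $$ (e,e)) * Y $$ (f,f))"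
    by (intro sum.cong refl) (simp add: kron_mconj_entry[OF X Y] pair_index_less pair_index_div_mod)
  also have "\<dots> = cnj (mtrace X) * mtrace Y"
    using X Y by (simp add: mtrace_def sum_product)
  finally show ?thesis .
qed

lemma braket_vectorize:
  assumes L: "L \<in> carrier_mat D D" and Z: "Z \<in> carrier_mat D D"
  shows "braket (vectorize L) (vectorize Z) = (\<Sum>a<D. \<Sum>b<D. cnj (L $$ (a,b)) * Z $$ (a,b))"
proof -
  have "braket (vectorize L) (vectorize Z) = (\<Sum>k<D*D. cnj (vectorize L $ k) * vectorize Z $ k)"
    using L by (simp add: braket_def)
  also have "\<dots> = (\<Sum>e<D. \<Sum>f<D. cnj (vectorize L $ (e*D+f)) * vectorize Z $ (e*D+f))"
    by (rule sum_pair_index)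
  also have "\<dots> = (\<Sum>b<D. \<Sum>a<D. cnj (L $$ (a,b)) * Z $$ (a,b))"
    by (intro sum.cong refl) (simp add: vectorize_entry[OF L] vectorize_entry[OF Z] pair_index_less pair_index_div_mod)
  also have "\<dots> = (\<Sum>a<D. \<Sum>b<D. cnj (L $$ (a,b)) * Z $$ (a,b))" by (rule sum.swap)
  finally show ?thesis .
qed

lemma braket_vectorize_diagonal:
  assumes L: "L \<in> carrier_mat D D" and dg: "diagonal_mat L" and Z: "Z \<in> carrier_mat D D"
  shows "braket (vectorize L) (vectorize Z) = (\<Sum>a<D. cnj (L $$ (a,a)) * Z $$ (a,a))"
proof -
  have "(\<Sum>b<D. cnj (L $$ (a,b)) * Z $$ (a,b)) = cnj (L $$ (a,a)) * Z $$ (a,a)" if "a < D" for a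
  proof -
    have "(\<Sum>b<D. cnj (L $$ (a,b)) * Z $$ (a,b)) = (\<Sum>b<D. if b = a then cnj (L $$ (a,a)) * Z $$ (a,a) else 0)"
      using that dg L by (intro sum.cong refl) (auto simp: diagonal_mat_def)
    then show ?thesis using that by simp
  qed
  then show ?thesis by (simp add: braket_vectorize[OF L Z])
qed

lemma braket_vectorize_one:
  assumes L: "L \<in> carrier_mat D D"
  shows "braket (vectorize L) (vectorize (1\<^sub>m D)) = cnj (mtrace L)"
proof -
  have "braket (vectorize L) (vectorize (1\<^sub>m D)) = (\<Sum>a<D. \<Sum>b<D. if b = a then cnj (L $$ (a,a)) else 0)"
    by (simp add: braket_vectorize[OF L one_carrier_mat] if_distrib[of "(*) _"] cong: if_cong)
  also have "\<dots> = cnj (mtrace L)" using L by (simp add: mtrace_def)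
  finally show ?thesis .
qed

lemma frob_norm_nonneg: "0 \<le> frob_norm X"
  unfolding frob_norm_def by (intro real_sqrt_ge_zero sum_nonneg) auto

lemma frob_norm_square:
  "X \<in> carrier_mat D D \<Longrightarrow> (frob_norm X)\<^sup>2 = (\<Sum>a<D. \<Sum>k<D. (cmod (X $$ (a,k)))\<^sup>2)"
  unfolding frob_norm_def by (simp add: sum_nonneg)

lemma entry_le_frob_norm:
  assumes X: "X \<in> carrier_mat D D" and i: "i < D" and j: "j < D"
  shows "cmod (X $$ (i,j)) \<le> frob_norm X"
proof -
  have "(cmod (X $$ (i,j)))\<^sup>2 \<le> (\<Sum>j'<D. (cmod (X $$ (i,j')))\<^sup>2)"
    using j by (intro member_le_sum) auto
  also have "\<dots> \<le> (\<Sum>i'<D. \<Sum>j'<D. (cmod (X $$ (i',j')))\<^sup>2)"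
    using i by (intro member_le_sum[of i "{..<D}" "\<lambda>i'. \<Sum>j'<D. (cmod (X $$ (i',j')))\<^sup>2"])
      (auto intro: sum_nonneg)
  finally have "(cmod (X $$ (i,j)))\<^sup>2 \<le> (frob_norm X)\<^sup>2" by (simp add: frob_norm_square[OF X])
  then show ?thesis using frob_norm_nonneg by (rule power2_le_imp_le)
qed

lemma overlap_self_diagonal:
  assumes X: "X \<in> carrier_mat D D" and L: "L \<in> carrier_mat D D" and dg: "diagonal_mat L"
  shows "braket (vectorize L) (kron (mconj X) X *\<^sub>v vectorize (1\<^sub>m D))
    = (\<Sum>a<D. cnj (L $$ (a,a)) * complex_of_real (\<Sum>k<D. (cmod (X $$ (a,k)))\<^sup>2))"
proof -
  have XH: "X * mat_adjoint X \<in> carrier_mat D D" using X mat_adjoint_carrier[OF X] by simp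
  have "kron (mconj X) X *\<^sub>v vectorize (1\<^sub>m D) = vectorize (X * mat_adjoint X)"
    using kron_mconj_mult_vectorize[OF X X one_carrier_mat] X by simp
  moreover have "(X * mat_adjoint X) $$ (a,a) = complex_of_real (\<Sum>k<D. (cmod (X $$ (a,k)))\<^sup>2)"
    if "a < D" for a
    using that X mat_adjoint_carrier[OF X]
    by (simp add: scalar_prod_def lessThan_atLeast0 mat_adjoint_entry mult_cnj_eq_cmod_square)
  ultimately show ?thesis by (simp add: braket_vectorize_diagonal[OF L dg XH])
qed

lemma overlap_self_lower_bound:
  assumes X: "X \<in> carrier_mat D D" and L: "L \<in> carrier_mat D D" and dg: "diagonal_mat L"
    and lm: "\<And>a. a < D \<Longrightarrow> lm \<le> Re (L $$ (a,a))"
  shows "lm * (frob_norm X)\<^sup>2 \<le> Re (braket (vectorize L) (kron (mconj X) X *\<^sub>v vectorize (1\<^sub>m D)))"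
proof -
  have "lm * (frob_norm X)\<^sup>2 = (\<Sum>a<D. lm * (\<Sum>k<D. (cmod (X $$ (a,k)))\<^sup>2))"
    by (simp add: frob_norm_square[OF X] sum_distrib_left)
  also have "\<dots> \<le> (\<Sum>a<D. Re (L $$ (a,a)) * (\<Sum>k<D. (cmod (X $$ (a,k)))\<^sup>2))"
    by (intro sum_mono mult_right_mono lm sum_nonneg) auto
  also have "\<dots> = Re (braket (vectorize L) (kron (mconj X) X *\<^sub>v vectorize (1\<^sub>m D)))"
    by (simp add: overlap_self_diagonal[OF X L dg] Re_sum)
  finally show ?thesis .
qed

lemma mtrace_mult_kron_bound:
  assumes X: "X \<in> carrier_mat D D" and Y: "Y \<in> carrier_mat D D"
    and M: "M \<in> carrier_mat (D*D) (D*D)" and nb: "norm_bound M eps"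
  shows "cmod (mtrace (M * kron (mconj X) Y)) \<le> real (D*D) * real (D*D) * eps * frob_norm X * frob_norm Y"
proof -
  have entry_bound: "cmod (M $$ (r,s) * kron (mconj X) Y $$ (s,r)) \<le> eps * frob_norm X * frob_norm Y"
    if r: "r < D*D" and s: "s < D*D" for r s
  proof -
    note rr = index_div_mod_less[OF r] and ss = index_div_mod_less[OF s]
    have m: "cmod (M $$ (r,s)) \<le> eps" using nb M r s unfolding norm_bound_def by auto
    have k: "cmod (kron (mconj X) Y $$ (s,r)) \<le> frob_norm X * frob_norm Y"
      unfolding kron_mconj_entry[OF X Y s r] norm_mult complex_mod_cnj
      by (intro mult_mono entry_le_frob_norm[OF X] entry_le_frob_norm[OF Y] rr ss)
        (auto simp: frob_norm_nonneg)
    have "cmod (M $$ (r,s) * kron (mconj X) Y $$ (s,r)) \<le> eps * (frob_norm X * frob_norm Y)"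
      unfolding norm_mult using m k order_trans[OF norm_ge_zero m] by (intro mult_mono) auto
    then show ?thesis by (simp add: mult.assoc)
  qed
  have "cmod (mtrace (M * kron (mconj X) Y)) \<le> (\<Sum>r<D*D. \<Sum>s<D*D. cmod (M $$ (r,s) * kron (mconj X) Y $$ (s,r)))"
    unfolding mtrace_mult[OF M kron_mconj_carrier[OF X Y]]
    by (rule order_trans[OF norm_sum sum_mono[OF norm_sum]])
  also have "\<dots> \<le> (\<Sum>r<D*D. \<Sum>s<D*D. eps * frob_norm X * frob_norm Y)"
    by (intro sum_mono entry_bound) auto
  finally show ?thesis by (simp add: mult.assoc)
qed

section \<open>The transfer matrix\<close>

lemma transfer_matrix_carrier: "transfer_matrix D p A \<in> carrier_mat (D*D) (D*D)"
  unfolding transfer_matrix_def by simp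

lemma transfer_matrix_mult_vec_entry:
  assumes A: "\<forall>i<p. A i \<in> carrier_mat D D" and v: "dim_vec v = D*D" and r: "r < D*D"
  shows "(transfer_matrix D p A *\<^sub>v v) $ r = (\<Sum>i<p. (kron (mconj (A i)) (A i) *\<^sub>v v) $ r)"
proof -
  have "(transfer_matrix D p A *\<^sub>v v) $ r = (\<Sum>k<D*D. (\<Sum>i<p. kron (mconj (A i)) (A i) $$ (r,k)) * v $ k)"
    using v r by (simp add: transfer_matrix_def scalar_prod_def lessThan_atLeast0)
  also have "\<dots> = (\<Sum>i<p. \<Sum>k<D*D. kron (mconj (A i)) (A i) $$ (r,k) * v $ k)"
    unfolding sum_distrib_right by (rule sum.swap)
  also have "\<dots> = (\<Sum>i<p. (kron (mconj (A i)) (A i) *\<^sub>v v) $ r)"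
  proof (rule sum.cong[OF refl])
    fix i assume "i \<in> {..<p}"
    then have "kron (mconj (A i)) (A i) \<in> carrier_mat (D*D) (D*D)" using A by (simp add: kron_mconj_carrier)
    then show "(\<Sum>k<D*D. kron (mconj (A i)) (A i) $$ (r,k) * v $ k) = (kron (mconj (A i)) (A i) *\<^sub>v v) $ r"
      by (rule mat_vec_entry[symmetric, OF _ v r])
  qed
  finally show ?thesis .
qed

lemma transfer_matrix_mult_entry:
  assumes A: "\<forall>i<p. A i \<in> carrier_mat D D" and K: "K \<in> carrier_mat (D*D) (D*D)"
    and r: "r < D*D" and c: "c < D*D"
  shows "(transfer_matrix D p A * K) $$ (r,c) = (\<Sum>i<p. (kron (mconj (A i)) (A i) * K) $$ (r,c))"
proof -
  have "(transfer_matrix D p A * K) $$ (r,c) = (transfer_matrix D p A *\<^sub>v col K c) $ r"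
    using K r c transfer_matrix_carrier[of D p A] by simp
  also have "\<dots> = (\<Sum>i<p. (kron (mconj (A i)) (A i) *\<^sub>v col K c) $ r)"
    using K by (intro transfer_matrix_mult_vec_entry A r) simp
  also have "\<dots> = (\<Sum>i<p. (kron (mconj (A i)) (A i) * K) $$ (r,c))"
  proof (rule sum.cong[OF refl])
    fix i assume "i \<in> {..<p}"
    then have "kron (mconj (A i)) (A i) \<in> carrier_mat (D*D) (D*D)" using A by (simp add: kron_mconj_carrier)
    then show "(kron (mconj (A i)) (A i) *\<^sub>v col K c) $ r = (kron (mconj (A i)) (A i) * K) $$ (r,c)"
      using K r c by simp
  qed
  finally show ?thesis .
qed

lemma transfer_matrix_mult_vectorize:
  assumes A: "\<forall>i<p. A i \<in> carrier_mat D D" and X: "X \<in> carrier_mat D D"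
  shows "transfer_matrix D p A *\<^sub>v vectorize X = vectorize (cp_map D p A X)"
proof (rule eq_vecI)
  have C: "cp_map D p A X \<in> carrier_mat D D" unfolding cp_map_def by simp
  fix r assume "r < dim_vec (vectorize (cp_map D p A X))"
  then have r: "r < D*D" using C by simp
  note rr = index_div_mod_less[OF r]
  have "(transfer_matrix D p A *\<^sub>v vectorize X) $ r = (\<Sum>i<p. (kron (mconj (A i)) (A i) *\<^sub>v vectorize X) $ r)"
    using X by (intro transfer_matrix_mult_vec_entry A r) simp
  also have "\<dots> = (\<Sum>i<p. (A i * X * mat_adjoint (A i)) $$ (r mod D, r div D))"
  proof (rule sum.cong[OF refl])
    fix i assume "i \<in> {..<p}"
    then have Ai: "A i \<in> carrier_mat D D" using A by simp
    then have "A i * X * mat_adjoint (A i) \<in> carrier_mat D D" using X mat_adjoint_carrier[OF Ai] by simp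
    then show "(kron (mconj (A i)) (A i) *\<^sub>v vectorize X) $ r = (A i * X * mat_adjoint (A i)) $$ (r mod D, r div D)"
      unfolding kron_mconj_mult_vectorize[OF Ai Ai X] by (rule vectorize_entry[OF _ r])
  qed
  also have "\<dots> = vectorize (cp_map D p A X) $ r"
    unfolding vectorize_entry[OF C r] using rr by (simp add: cp_map_def)
  finally show "(transfer_matrix D p A *\<^sub>v vectorize X) $ r = vectorize (cp_map D p A X) $ r" .
qed (simp add: transfer_matrix_def cp_map_def)

lemma mat_adjoint_transfer_matrix:
  assumes A: "\<forall>i<p. A i \<in> carrier_mat D D"
  shows "mat_adjoint (transfer_matrix D p A) = transfer_matrix D p (\<lambda>i. mat_adjoint (A i))"
proof (rule eq_matI)
  fix c r assume "c < dim_row (transfer_matrix D p (\<lambda>i. mat_adjoint (A i)))"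
    "r < dim_col (transfer_matrix D p (\<lambda>i. mat_adjoint (A i)))"
  then have c: "c < D*D" and r: "r < D*D" by (simp_all add: transfer_matrix_def)
  note rr = index_div_mod_less[OF r] and cc = index_div_mod_less[OF c]
  have "mat_adjoint (transfer_matrix D p A) $$ (c,r) = (\<Sum>i<p. cnj (kron (mconj (A i)) (A i) $$ (r,c)))"
    using r c by (simp add: mat_adjoint_entry transfer_matrix_def)
  also have "\<dots> = (\<Sum>i<p. kron (mconj (mat_adjoint (A i))) (mat_adjoint (A i)) $$ (c,r))"
  proof (rule sum.cong[OF refl])
    fix i assume "i \<in> {..<p}"
    then have Ai: "A i \<in> carrier_mat D D" using A by simp
    note AiH = mat_adjoint_carrier[OF Ai]
    show "cnj (kron (mconj (A i)) (A i) $$ (r,c)) = kron (mconj (mat_adjoint (A i))) (mat_adjoint (A i)) $$ (c,r)"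
      using Ai rr cc
      by (simp add: kron_mconj_entry[OF Ai Ai r c] kron_mconj_entry[OF AiH AiH c r] mat_adjoint_entry)
  qed
  also have "\<dots> = transfer_matrix D p (\<lambda>i. mat_adjoint (A i)) $$ (c,r)"
    using r c by (simp add: transfer_matrix_def)
  finally show "mat_adjoint (transfer_matrix D p A) $$ (c,r) = transfer_matrix D p (\<lambda>i. mat_adjoint (A i)) $$ (c,r)" .
qed (simp_all add: transfer_matrix_def)

lemma cp_map_adjoint:
  assumes A: "\<forall>i<p. A i \<in> carrier_mat D D"
  shows "cp_map D p (\<lambda>i. mat_adjoint (A i)) Y = cp_dual D p A Y"
proof -
  have adj: "mat_adjoint (mat_adjoint (A i)) = A i" if "i < p" for i
    using A that by (simp add: mat_adjoint_adjoint[of _ D])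
  show ?thesis unfolding cp_map_def cp_dual_def by (auto intro!: eq_matI sum.cong simp: adj)
qed

lemma mat_adjoint_transfer_mult_vectorize:
  assumes A: "\<forall>i<p. A i \<in> carrier_mat D D" and Y: "Y \<in> carrier_mat D D"
  shows "mat_adjoint (transfer_matrix D p A) *\<^sub>v vectorize Y = vectorize (cp_dual D p A Y)"
  using transfer_matrix_mult_vectorize[of p "\<lambda>i. mat_adjoint (A i)" D Y] A Y
  by (simp add: mat_adjoint_transfer_matrix cp_map_adjoint mat_adjoint_carrier)

lemma words_0: "words p 0 = {[]}"
  by (auto simp: words_def)

lemma words_Suc: "words p (Suc n) = (\<lambda>(w,i). w @ [i]) ` (words p n \<times> {..<p})"
proof
  show "(\<lambda>(w,i). w @ [i]) ` (words p n \<times> {..<p}) \<subseteq> words p (Suc n)"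
    by (auto simp: words_def)
  show "words p (Suc n) \<subseteq> (\<lambda>(w,i). w @ [i]) ` (words p n \<times> {..<p})"
  proof
    fix w assume w: "w \<in> words p (Suc n)"
    then have "w \<noteq> []" by (auto simp: words_def)
    then have "w = butlast w @ [last w]" and "last w \<in> set w" by simp_all
    moreover have "butlast w \<in> words p n" using w by (auto simp: words_def dest: in_set_butlastD)
    ultimately show "w \<in> (\<lambda>(w,i). w @ [i]) ` (words p n \<times> {..<p})"
      using w by (intro image_eqI[of _ _ "(butlast w, last w)"]) (auto simp: words_def)
  qed
qed

lemma mps_inner_Suc: "mps_inner p A (Suc n) X Y = (\<Sum>i<p. mps_inner p A n (A i * X) (A i * Y))"
proof -
  have inj: "inj_on (\<lambda>(w,i). w @ [i]) (words p n \<times> {..<p})"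
    by (auto simp: inj_on_def)
  have "mps_inner p A (Suc n) X Y
      = (\<Sum>(w,i)\<in>words p n \<times> {..<p}. cnj (mps_coeff A X (w@[i])) * mps_coeff A Y (w@[i]))"
    unfolding mps_inner_def words_Suc by (subst sum.reindex[OF inj]) (simp add: case_prod_beta)
  also have "\<dots> = (\<Sum>w\<in>words p n. \<Sum>i<p. cnj (mps_coeff A (A i * X) w) * mps_coeff A (A i * Y) w)"
    by (subst sum.cartesian_product[symmetric]) (simp add: mps_coeff_def)
  also have "\<dots> = (\<Sum>i<p. mps_inner p A n (A i * X) (A i * Y))"
    unfolding mps_inner_def by (rule sum.swap)
  finally show ?thesis .
qed

lemma mps_inner_commute: "mps_inner p A n Y X = cnj (mps_inner p A n X Y)"
  unfolding mps_inner_def by (simp add: mult.commute)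

lemma mtrace_mult_transfer_kron:
  assumes A: "\<forall>i<p. A i \<in> carrier_mat D D" and X: "X \<in> carrier_mat D D" and Y: "Y \<in> carrier_mat D D"
    and M: "M \<in> carrier_mat (D*D) (D*D)"
  shows "mtrace (M * (transfer_matrix D p A * kron (mconj X) Y))
    = (\<Sum>i<p. mtrace (M * kron (mconj (A i * X)) (A i * Y)))"
proof -
  let ?K = "\<lambda>i. kron (mconj (A i * X)) (A i * Y)"
  have K: "kron (mconj X) Y \<in> carrier_mat (D*D) (D*D)" by (rule kron_mconj_carrier[OF X Y])
  have Ki: "?K i \<in> carrier_mat (D*D) (D*D)" if "i < p" for i
    using A X Y that by (intro kron_mconj_carrier) auto
  have EK: "(transfer_matrix D p A * kron (mconj X) Y) $$ (s,r) = (\<Sum>i<p. ?K i $$ (s,r))"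
    if "s < D*D" "r < D*D" for s r
    using A X Y that by (simp add: transfer_matrix_mult_entry[OF A K] kron_mconj_mult_kron_mconj[of _ D])
  have "mtrace (M * (transfer_matrix D p A * kron (mconj X) Y))
      = (\<Sum>r<D*D. \<Sum>s<D*D. \<Sum>i<p. M $$ (r,s) * ?K i $$ (s,r))"
    using transfer_matrix_carrier[of D p A] K
    by (simp del: index_mult_mat add: mtrace_mult[OF M] EK sum_distrib_left)
  also have "\<dots> = (\<Sum>r<D*D. \<Sum>i<p. \<Sum>s<D*D. M $$ (r,s) * ?K i $$ (s,r))"
    by (rule sum.cong[OF refl], rule sum.swap)
  also have "\<dots> = (\<Sum>i<p. \<Sum>r<D*D. \<Sum>s<D*D. M $$ (r,s) * ?K i $$ (s,r))"
    by (rule sum.swap)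
  also have "\<dots> = (\<Sum>i<p. mtrace (M * ?K i))"
    by (intro sum.cong refl) (simp add: mtrace_mult[OF M Ki])
  finally show ?thesis .
qed

lemma mps_inner_eq_mtrace:
  assumes A: "\<forall>i<p. A i \<in> carrier_mat D D"
  shows "X \<in> carrier_mat D D \<Longrightarrow> Y \<in> carrier_mat D D \<Longrightarrow>
    mps_inner p A n X Y = mtrace (transfer_matrix D p A ^\<^sub>m n * kron (mconj X) Y)"
proof (induction n arbitrary: X Y)
  case 0
  have "mps_inner p A 0 X Y = cnj (mtrace X) * mtrace Y"
    unfolding mps_inner_def words_0 by (simp add: mps_coeff_def)
  then show ?case
    using mtrace_kron_mconj[OF 0] kron_mconj_carrier[OF 0] transfer_matrix_carrier[of D p A] by simp
next
  case (Suc n)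
  let ?E = "transfer_matrix D p A"
  have En: "?E ^\<^sub>m n \<in> carrier_mat (D*D) (D*D)" using transfer_matrix_carrier by simp
  have "mps_inner p A (Suc n) X Y = (\<Sum>i<p. mps_inner p A n (A i * X) (A i * Y))"
    by (rule mps_inner_Suc)
  also have "\<dots> = (\<Sum>i<p. mtrace (?E ^\<^sub>m n * kron (mconj (A i * X)) (A i * Y)))"
    using A Suc.prems by (intro sum.cong refl Suc.IH) auto
  also have "\<dots> = mtrace (?E ^\<^sub>m n * (?E * kron (mconj X) Y))"
    by (rule mtrace_mult_transfer_kron[OF A Suc.prems En, symmetric])
  also have "\<dots> = mtrace (?E ^\<^sub>m Suc n * kron (mconj X) Y)"
    using assoc_mult_mat[OF En transfer_matrix_carrier kron_mconj_carrier[OF Suc.prems]] by simp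
  finally show ?case .
qed

lemma transfer_matrix_mult_ketbra_identity:
  assumes A: "\<forall>i<p. A i \<in> carrier_mat D D" and fixed: "cp_map D p A (1\<^sub>m D) = 1\<^sub>m D"
  shows "transfer_matrix D p A * ketbra (vectorize (1\<^sub>m D)) w = ketbra (vectorize (1\<^sub>m D)) w"
proof -
  have "transfer_matrix D p A * ketbra (vectorize (1\<^sub>m D)) w
      = ketbra (transfer_matrix D p A *\<^sub>v vectorize (1\<^sub>m D)) w"
    by (rule mult_ketbra[OF transfer_matrix_carrier vectorize_carrier[OF one_carrier_mat]])
  then show ?thesis by (simp add: transfer_matrix_mult_vectorize[OF A one_carrier_mat] fixed)
qed

lemma ketbra_mult_transfer_matrix:
  assumes A: "\<forall>i<p. A i \<in> carrier_mat D D" and L: "L \<in> carrier_mat D D"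
    and fixed: "cp_dual D p A L = L"
  shows "ketbra u (vectorize L) * transfer_matrix D p A = ketbra u (vectorize L)"
proof -
  have "ketbra u (vectorize L) * transfer_matrix D p A
      = ketbra u (mat_adjoint (transfer_matrix D p A) *\<^sub>v vectorize L)"
    by (rule ketbra_mult[OF transfer_matrix_carrier vectorize_carrier[OF L]])
  then show ?thesis by (simp add: mat_adjoint_transfer_mult_vectorize[OF A L] fixed)
qed

lemma ketbra_identity_idempotent:
  assumes L: "L \<in> carrier_mat D D" and tr: "mtrace L = 1"
  shows "ketbra (vectorize (1\<^sub>m D)) (vectorize L) * ketbra (vectorize (1\<^sub>m D)) (vectorize L)
    = ketbra (vectorize (1\<^sub>m D)) (vectorize L)"
proof -
  have "ketbra (vectorize (1\<^sub>m D)) (vectorize L) * ketbra (vectorize (1\<^sub>m D)) (vectorize L)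
      = braket (vectorize L) (vectorize (1\<^sub>m D)) \<cdot>\<^sub>m ketbra (vectorize (1\<^sub>m D)) (vectorize L)"
    by (rule ketbra_mult_ketbra[OF vectorize_carrier[OF L] vectorize_carrier[OF one_carrier_mat]])
  then show ?thesis by (auto simp: braket_vectorize_one[OF L] tr intro!: eq_matI)
qed

section \<open>Spectral estimates\<close>

lemma (in kernel) separated_pair_lin_indpt:
  assumes u: "u \<in> mat_kernel A" and v: "v \<in> mat_kernel A" and v0: "v \<noteq> 0\<^sub>v nc"
    and lu: "(\<Sum>i<nc. l i * u $ i) = 1" and lv: "(\<Sum>i<nc. l i * v $ i) = 0"
  shows "\<not> Ker.lin_dep {u,v}"
proof
  assume "Ker.lin_dep {u,v}"
  then obtain B a w where B: "finite B" "B \<subseteq> {u,v}" and lc: "lincomb a B = 0\<^sub>v nc"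
    and w: "w \<in> B" and aw: "a w \<noteq> 0"
    unfolding Ker.lin_dep_def by auto
  have uv: "u \<noteq> v" using lu lv by auto
  have vc: "v \<in> carrier_vec nc" using v mat_kernel[OF A] by auto
  have Bk: "B \<subseteq> mat_kernel A" using B u v by auto
  have coord: "(\<Sum>x\<in>B. a x * x $ i) = 0" if "i < nc" for i
    using lincomb_index[OF that Bk, of a] lc that by simp
  have "(\<Sum>x\<in>B. a x * (\<Sum>i<nc. l i * x $ i)) = (\<Sum>i<nc. l i * (\<Sum>x\<in>B. a x * x $ i))"
    by (simp add: sum_distrib_left mult_ac sum.swap[of _ B])
  also have "\<dots> = 0" using coord by simp
  finally have functional: "(\<Sum>x\<in>B. a x * (\<Sum>i<nc. l i * x $ i)) = 0" .
  have cases: "B = {} \<or> B = {u} \<or> B = {v} \<or> B = {u,v}" using B(2) by auto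
  have au: "u \<in> B \<Longrightarrow> a u = 0" using functional cases lu lv uv by auto
  have av: "a v = 0" if vB: "v \<in> B"
  proof -
    have "a v * v $ i = 0" if i: "i < nc" for i
    proof -
      have "(\<Sum>x\<in>B. a x * x $ i) = a v * v $ i" using cases vB au uv by auto
      then show ?thesis using coord[OF i] by simp
    qed
    moreover obtain i where "i < nc" "v $ i \<noteq> 0" using v0 vc by (auto simp: vec_eq_iff)
    ultimately show "a v = 0" by auto
  qed
  show False using w aw au av B(2) by auto
qed

lemma (in kernel) two_le_dim_of_separated_pair:
  assumes u: "u \<in> mat_kernel A" and v: "v \<in> mat_kernel A" and v0: "v \<noteq> 0\<^sub>v nc"
    and lu: "(\<Sum>i<nc. l i * u $ i) = 1" and lv: "(\<Sum>i<nc. l i * v $ i) = 0"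
  shows "2 \<le> dim"
proof -
  obtain Bs where "finite Bs" "basis Bs" using kernel_basis_exists[OF A] by auto
  then have "Ker.fin_dim" unfolding Ker.fin_dim_def Ker.basis_def by auto
  then have "card {u,v} \<le> dim"
    by (rule Ker.li_le_dim(2)[OF _ _ separated_pair_lin_indpt[OF assms]]) (use u v in auto)
  moreover have "u \<noteq> v" using lu lv by auto
  ultimately show ?thesis by simp
qed

lemma kernel_dim_le_order:
  fixes E :: "complex mat"
  assumes E: "E \<in> carrier_mat m m"
  shows "kernel_dim (char_matrix E a ^\<^sub>m 1) \<le> Polynomial.order a (char_poly E)"
proof -
  obtain as where "char_poly E = (\<Prod>a\<leftarrow>as. [:- a, 1:])" using char_poly_factorized[OF E] by auto
  from jordan_nf_exists[OF E this] obtain n_as where jnf: "jordan_nf E n_as" by auto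
  have "kernel_dim (char_matrix E a ^\<^sub>m 1) = dim_gen_eigenspace E a 1"
    unfolding dim_gen_eigenspace_def by simp
  also have "\<dots> \<le> Polynomial.order a (char_poly E)"
    unfolding dim_gen_eigenspace[OF jnf] jordan_nf_order[OF jnf] by (induct n_as) auto
  finally show ?thesis .
qed

lemma fixed_vector_in_kernel:
  fixes E :: "complex mat"
  assumes E: "E \<in> carrier_mat m m" and x: "x \<in> carrier_vec m" and Ex: "E *\<^sub>v x = x"
  shows "x \<in> mat_kernel (char_matrix E 1 ^\<^sub>m 1)"
proof -
  have K: "char_matrix E 1 ^\<^sub>m 1 = E - 1\<^sub>m m"
    using E unfolding char_matrix_def by (intro eq_matI) auto
  have "(E - 1\<^sub>m m) *\<^sub>v x = E *\<^sub>v x - 1\<^sub>m m *\<^sub>v x"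
    by (rule minus_mult_distrib_mat_vec[OF E _ x]) simp
  also have "\<dots> = 0\<^sub>v m" using Ex x by (intro eq_vecI) auto
  finally show ?thesis unfolding K using E x by (intro mat_kernelI) auto
qed

lemma functional_nonzero_on_fixed_vector:
  fixes E :: "complex mat"
  assumes E: "E \<in> carrier_mat m m" and simple: "Polynomial.order 1 (char_poly E) = 1"
    and u: "u \<in> carrier_vec m" "E *\<^sub>v u = u" and lu: "(\<Sum>i<m. l i * u $ i) = 1"
    and v: "v \<in> carrier_vec m" "E *\<^sub>v v = v" "v \<noteq> 0\<^sub>v m"
  shows "(\<Sum>i<m. l i * v $ i) \<noteq> 0"
proof
  assume lv: "(\<Sum>i<m. l i * v $ i) = 0"
  have K: "char_matrix E 1 ^\<^sub>m 1 \<in> carrier_mat m m" using E by (simp add: char_matrix_def)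
  interpret kernel m m "char_matrix E 1 ^\<^sub>m 1" by (unfold_locales, rule K)
  have "2 \<le> dim"
    by (rule two_le_dim_of_separated_pair[OF fixed_vector_in_kernel[OF E u(1,2)]
        fixed_vector_in_kernel[OF E v(1,2)] v(3) lu lv])
  then have "2 \<le> kernel_dim (char_matrix E 1 ^\<^sub>m 1)" by (simp only: kernel_dim)
  with kernel_dim_le_order[OF E, of 1] simple show False by simp
qed

lemma eigenvector_minus_idempotent:
  fixes E P :: "complex mat"
  assumes E: "E \<in> carrier_mat m m" and P: "P \<in> carrier_mat m m"
    and PE: "P * E = P" and PP: "P * P = P"
    and ev: "eigenvector (E - P) v \<mu>" and \<mu>: "\<mu> \<noteq> 0"
  shows "P *\<^sub>v v = 0\<^sub>v m" "eigenvector E v \<mu>"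
proof -
  have F: "E - P \<in> carrier_mat m m" by (rule minus_carrier_mat[OF P])
  from ev have v: "v \<in> carrier_vec m" and v0: "v \<noteq> 0\<^sub>v m" and Fv: "(E - P) *\<^sub>v v = \<mu> \<cdot>\<^sub>v v"
    unfolding eigenvector_def using P by auto
  have "P * (E - P) = P * E - P * P" by (rule mult_minus_distrib_mat[OF P E P])
  then have PF: "P * (E - P) = 0\<^sub>m m m" using PE PP P by simp
  have "\<mu> \<cdot>\<^sub>v (P *\<^sub>v v) = P *\<^sub>v ((E - P) *\<^sub>v v)" using Fv mult_mat_vec[OF P v] by simp
  also have "\<dots> = 0\<^sub>v m"
    unfolding assoc_mult_mat_vec[OF P F v, symmetric] PF using v
    by (intro eq_vecI) (auto simp: scalar_prod_def)
  finally have \<mu>Pv: "\<mu> \<cdot>\<^sub>v (P *\<^sub>v v) = 0\<^sub>v m" .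
  have "(P *\<^sub>v v) $ i = 0" if i: "i < m" for i
  proof -
    have "\<mu> * (P *\<^sub>v v) $ i = 0" using arg_cong[OF \<mu>Pv, of "\<lambda>w. w $ i"] i P by simp
    then show ?thesis using \<mu> by simp
  qed
  then show Pv: "P *\<^sub>v v = 0\<^sub>v m" using P by (intro eq_vecI) auto
  have "E *\<^sub>v v = (E - P) *\<^sub>v v + P *\<^sub>v v"
  proof -
    have "E = (E - P) + P" using E P by (intro eq_matI) auto
    then show ?thesis using add_mult_distrib_mat_vec[OF F P v] by metis
  qed
  then have "E *\<^sub>v v = \<mu> \<cdot>\<^sub>v v" using Fv Pv v by simp
  then show "eigenvector E v \<mu>" unfolding eigenvector_def using v v0 E by auto
qed

lemma smult_pow_mat:
  fixes M :: "complex mat" assumes M: "M \<in> carrier_mat n n"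
  shows "(a \<cdot>\<^sub>m M) ^\<^sub>m k = a ^ k \<cdot>\<^sub>m (M ^\<^sub>m k)"
proof (induction k)
  case 0
  show ?case using M by (intro eq_matI) auto
next
  case (Suc k)
  have Mk: "M ^\<^sub>m k \<in> carrier_mat n n" using M by simp
  have "(a \<cdot>\<^sub>m M) ^\<^sub>m Suc k = a ^ k \<cdot>\<^sub>m (M ^\<^sub>m k * (a \<cdot>\<^sub>m M))"
    using Suc.IH mult_smult_assoc_mat[OF Mk smult_carrier_mat[OF M]] by simp
  also have "M ^\<^sub>m k * (a \<cdot>\<^sub>m M) = a \<cdot>\<^sub>m (M ^\<^sub>m k * M)"
    by (rule mult_smult_distrib[OF Mk M])
  finally show ?case using M by (intro eq_matI) (auto simp: mult_ac)
qed

lemma power_norm_bound_of_eigenvalues_less: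
  fixes F :: "complex mat"
  assumes F: "F \<in> carrier_mat m m" and m: "m > 0" and s: "0 < s"
    and ev: "\<And>\<mu>. eigenvalue F \<mu> \<Longrightarrow> cmod \<mu> < s"
  shows "\<exists>c. \<forall>k. norm_bound (F ^\<^sub>m k) (c * s ^ k)"
proof -
  define G where "G = complex_of_real (1/s) \<cdot>\<^sub>m F"
  have G: "G \<in> carrier_mat m m" unfolding G_def using F by simp
  have FG: "F = complex_of_real s \<cdot>\<^sub>m G" unfolding G_def using F s by (intro eq_matI) auto
  obtain \<nu> w where w: "eigenvector G w \<nu>" and sr: "spectral_radius G = cmod \<nu>"
    using spectral_radius_mem_max(1)[OF G m] unfolding spectrum_def eigenvalue_def by auto
  then have wc: "w \<in> carrier_vec m" and w0: "w \<noteq> 0\<^sub>v m" and Gw: "G *\<^sub>v w = \<nu> \<cdot>\<^sub>v w"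
    unfolding eigenvector_def using G by auto
  have "F *\<^sub>v w = complex_of_real s \<cdot>\<^sub>v (G *\<^sub>v w)"
    unfolding FG using G wc by (intro eq_vecI) (auto simp: scalar_prod_def sum_distrib_left mult_ac)
  also have "\<dots> = (complex_of_real s * \<nu>) \<cdot>\<^sub>v w" unfolding Gw by (simp add: smult_smult_assoc)
  finally have "F *\<^sub>v w = (complex_of_real s * \<nu>) \<cdot>\<^sub>v w" .
  then have "eigenvalue F (complex_of_real s * \<nu>)"
    unfolding eigenvalue_def eigenvector_def using wc w0 F by auto
  from ev[OF this] have "s * cmod \<nu> < s * 1" using s by (simp add: norm_mult)
  then have "cmod \<nu> < 1" using s by (simp only: mult_less_cancel_left_pos)
  then have "spectral_radius G < 1" using sr by simp
  from spectral_radius_jnf_norm_bound_less_1_upper_triangular[OF G this]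
  obtain c where c: "\<And>k. norm_bound (G ^\<^sub>m k) c" by auto
  have "norm_bound (F ^\<^sub>m k) (c * s ^ k)" for k
  proof
    fix i j assume "i < dim_row (F ^\<^sub>m k)" "j < dim_col (F ^\<^sub>m k)"
    moreover have "F ^\<^sub>m k \<in> carrier_mat m m" using F by simp
    ultimately have ij: "i < m" "j < m" by auto
    have "norm ((F ^\<^sub>m k) $$ (i,j)) = s ^ k * norm ((G ^\<^sub>m k) $$ (i,j))"
      unfolding FG smult_pow_mat[OF G] using ij G s by (simp add: norm_mult norm_power)
    also have "\<dots> \<le> s ^ k * c"
      using c[of k] ij G s unfolding norm_bound_def by (intro mult_left_mono) auto
    finally show "norm ((F ^\<^sub>m k) $$ (i,j)) \<le> c * s ^ k" by (simp add: mult.commute)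
  qed
  then show ?thesis by blast
qed

lemma jordan_nf_block_eigenvalue:
  fixes F :: "complex mat"
  assumes F: "F \<in> carrier_mat m m" and jnf: "jordan_nf F n_as" and na: "(n,a) \<in> set n_as"
  shows "eigenvalue F a" "n \<le> m"
proof -
  have cp0: "char_poly F \<noteq> 0" using degree_monic_char_poly[OF F] by auto
  have "n > 0" using jnf na unfolding jordan_nf_def by force
  moreover have ord: "n \<le> Polynomial.order a (char_poly F)"
    by (rule jordan_nf_block_size_order_bound[OF jnf na])
  ultimately have "poly (char_poly F) a = 0" using order_root[of "char_poly F" a] by auto
  then show "eigenvalue F a" using eigenvalue_root_char_poly[OF F] by simp
  show "n \<le> m" using ord order_degree[OF cp0, of a] degree_monic_char_poly[OF F] by simp
qed

lemma jordan_nf_matrix_carrier: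
  assumes F: "F \<in> carrier_mat m m" and jnf: "jordan_nf F n_as"
  shows "jordan_matrix n_as \<in> carrier_mat m m"
proof -
  from jnf have "similar_mat F (jordan_matrix n_as)" unfolding jordan_nf_def by auto
  from similar_matD[OF this] obtain n P Q where "{F, jordan_matrix n_as, P, Q} \<subseteq> carrier_mat n n" by blast
  with F show ?thesis unfolding carrier_mat_def by simp
qed

lemma nilpotent_power_norm_bound:
  fixes F :: "complex mat"
  assumes F: "F \<in> carrier_mat m m" and ev: "\<And>\<mu>. eigenvalue F \<mu> \<Longrightarrow> \<mu> = 0" and k: "k \<ge> m"
  shows "norm_bound (F ^\<^sub>m k) 0"
proof -
  obtain as where "char_poly F = (\<Prod>a\<leftarrow>as. [:- a, 1:])" using char_poly_factorized[OF F] by auto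
  from jordan_nf_exists[OF F this] obtain n_as where jnf: "jordan_nf F n_as" by auto
  from jordan_nf_powE[OF F jnf] obtain Pm Qm where Pm: "Pm \<in> carrier_mat m m" and Qm: "Qm \<in> carrier_mat m m"
    and pow: "\<And>k. F ^\<^sub>m k = Pm * (jordan_matrix n_as) ^\<^sub>m k * Qm" by metis
  let ?J = "jordan_matrix n_as ^\<^sub>m k"
  have "norm e \<le> 0" if e: "e \<in> elements_mat ?J" for e
  proof -
    have "?J = diag_block_mat (map (\<lambda>(n,a). jordan_block n a ^\<^sub>m k) n_as)"
      by (rule jordan_matrix_pow)
    then have "e \<in> elements_mat (diag_block_mat (map (\<lambda>(n,a). jordan_block n a ^\<^sub>m k) n_as))"
      using e by simp
    then have "e \<in> {0} \<union> \<Union> (set (map elements_mat (map (\<lambda>(n,a). jordan_block n a ^\<^sub>m k) n_as)))"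
      by (rule subsetD[OF elements_diag_block_mat])
    moreover have "e = 0" if "e \<in> elements_mat (jordan_block n a ^\<^sub>m k)" "(n,a) \<in> set n_as" for n a
    proof -
      have a: "a = 0" and nm: "n \<le> m" using jordan_nf_block_eigenvalue[OF F jnf that(2)] ev by auto
      from elements_matD[OF that(1)] obtain i j where "i < dim_row (jordan_block n a ^\<^sub>m k)"
        "j < dim_col (jordan_block n a ^\<^sub>m k)" and ee: "e = (jordan_block n a ^\<^sub>m k) $$ (i,j)"
        by blast
      then have "i < n" "j < n" by (simp_all only: jordan_block_pow_dim)
      then show "e = 0" unfolding ee a jordan_block_zero_pow using nm k by auto
    qed
    ultimately show "norm e \<le> 0" by force
  qed
  then have nJ: "norm_bound ?J 0" by (intro norm_bound_bridge) blast
  obtain bP where bP: "norm_bound Pm bP" using norm_bound_max[of Pm] by auto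
  obtain bQ where bQ: "norm_bound Qm bQ" using norm_bound_max[of Qm] by auto
  have JC: "?J \<in> carrier_mat m m" using jordan_nf_matrix_carrier[OF F jnf] by simp
  have "norm_bound (Pm * ?J) (bP * 0 * of_nat m)" by (rule norm_bound_mult[OF Pm JC bP nJ])
  then have "norm_bound (Pm * ?J) 0" by simp
  from norm_bound_mult[OF mult_carrier_mat[OF Pm JC] Qm this bQ]
  show ?thesis using pow[of k] by simp
qed

(* The rate sqrt r, weaker than r, absorbs the polynomial factors of nontrivial Jordan blocks. *)
lemma power_norm_bound_sqrt:
  fixes F :: "complex mat"
  assumes F: "F \<in> carrier_mat m m" and m: "m > 0" and r0: "0 \<le> r" and r1: "r < 1"
    and ev: "\<And>\<mu>. eigenvalue F \<mu> \<Longrightarrow> cmod \<mu> \<le> r"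
  shows "\<exists>c N. 0 \<le> c \<and> (\<forall>k\<ge>N. norm_bound (F ^\<^sub>m k) (c * sqrt r ^ k))"
proof (cases "r = 0")
  case True
  have nil: "\<mu> = 0" if "eigenvalue F \<mu>" for \<mu> using ev[OF that] True by simp
  have "\<forall>k\<ge>m. norm_bound (F ^\<^sub>m k) (0 * sqrt r ^ k)"
    using nilpotent_power_norm_bound[OF F nil] by simp
  then show ?thesis by (intro exI[of _ 0] exI[of _ m]) simp
next
  case False
  then have s: "0 < sqrt r" using r0 by simp
  have "r = sqrt r * sqrt r" using r0 by simp
  also have "\<dots> < sqrt r * 1" using s r1 by (intro mult_strict_left_mono) auto
  finally have "cmod \<mu> < sqrt r" if "eigenvalue F \<mu>" for \<mu> using ev[OF that] by simp
  from power_norm_bound_of_eigenvalues_less[OF F m s this]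
  obtain c where c: "\<And>k. norm_bound (F ^\<^sub>m k) (c * sqrt r ^ k)" by auto
  have "\<forall>k. norm_bound (F ^\<^sub>m k) (max c 0 * sqrt r ^ k)"
    using c r0 unfolding norm_bound_def
    by (meson max.cobounded1 mult_right_mono order_trans real_sqrt_ge_zero zero_le_power)
  then show ?thesis by (intro exI[of _ "max c 0"] exI[of _ 0]) simp
qed

lemma finite_lambda2_set:
  fixes E :: "complex mat"
  assumes E: "E \<in> carrier_mat m m"
  shows "finite (insert 0 (cmod ` {\<mu>. eigenvalue E \<mu> \<and> \<mu> \<noteq> 1}))"
proof -
  have "{\<mu>. eigenvalue E \<mu> \<and> \<mu> \<noteq> 1} \<subseteq> spectrum E" unfolding spectrum_def by auto
  then show ?thesis using finite_subset card_finite_spectrum(1)[OF E] by blast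
qed

lemma eigenvalue_le_lambda2:
  fixes E :: "complex mat"
  assumes E: "E \<in> carrier_mat m m" and "eigenvalue E \<mu>" and "\<mu> \<noteq> 1"
  shows "cmod \<mu> \<le> lambda2 E"
  unfolding lambda2_def using assms finite_lambda2_set[OF E]
  by (intro cSup_upper) (auto intro: bdd_above_finite)

lemma lambda2_nonneg:
  fixes E :: "complex mat"
  assumes E: "E \<in> carrier_mat m m"
  shows "0 \<le> lambda2 E"
  unfolding lambda2_def using finite_lambda2_set[OF E]
  by (intro cSup_upper) (auto intro: bdd_above_finite)

lemma lambda2_less_1:
  fixes E :: "complex mat"
  assumes E: "E \<in> carrier_mat m m" and m: "m > 0" and sr: "spectral_radius E \<le> 1"
    and peripheral: "\<forall>\<mu>. eigenvalue E \<mu> \<and> cmod \<mu> = 1 \<longrightarrow> \<mu> = 1"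
  shows "lambda2 E < 1"
proof -
  define S where "S = insert 0 (cmod ` {\<mu>. eigenvalue E \<mu> \<and> \<mu> \<noteq> 1})"
  have fin: "finite S" unfolding S_def by (rule finite_lambda2_set[OF E])
  have "a < 1" if aS: "a \<in> S" for a
  proof -
    consider "a = 0" | \<mu> where "eigenvalue E \<mu>" "\<mu> \<noteq> 1" "a = cmod \<mu>"
      using aS by (auto simp: S_def)
    then show "a < 1"
    proof cases
      case 2
      then have "cmod \<mu> \<in> norm ` spectrum E" unfolding spectrum_def by auto
      then have "cmod \<mu> \<le> 1" using spectral_radius_mem_max(2)[OF E m] sr by fastforce
      moreover have "cmod \<mu> \<noteq> 1" using peripheral 2 by auto
      ultimately show ?thesis using 2 by simp
    qed simp
  qed
  moreover have ne: "S \<noteq> {}" unfolding S_def by simp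
  ultimately have "Max S < 1" using Max_less_iff[OF fin] by blast
  then show ?thesis unfolding lambda2_def S_def[symmetric] using cSup_eq_Max[OF fin ne] by simp
qed

lemma powr_half_eq_sqrt_power:
  fixes x :: real assumes x: "0 \<le> x" and n: "n \<ge> 1"
  shows "x powr (real n / 2) = sqrt x ^ n"
proof (cases "x = 0")
  case False
  then have "0 < x" using x by simp
  have "sqrt x ^ n = (x powr (1/2)) ^ n" using x by (simp add: powr_half_sqrt)
  also have "\<dots> = (x powr (1/2)) powr (real n)" using \<open>0 < x\<close> by (simp add: powr_realpow)
  also have "\<dots> = x powr (real n / 2)" by (simp add: powr_powr)
  finally show ?thesis by simp
qed (use n in \<open>simp add: power_0_left\<close>)

section \<open>Injective MPS in canonical form\<close>

locale canonical_injective_mps =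
  fixes D p :: nat and A :: "nat \<Rightarrow> complex mat" and Lam :: "complex mat"
  assumes tensor_carrier: "\<forall>i<p. A i \<in> carrier_mat D D"
    and injective: "injective_mps D p A"
    and canonical: "canonical_form D p A Lam"
begin

abbreviation E :: "complex mat" where
  "E \<equiv> transfer_matrix D p A"

(* The spectral projection of E onto its eigenvalue 1. *)
abbreviation P :: "complex mat" where
  "P \<equiv> ketbra (vectorize (1\<^sub>m D)) (vectorize Lam)"

abbreviation overlap :: "complex mat \<Rightarrow> complex mat \<Rightarrow> complex" where
  "overlap X Y \<equiv> braket (vectorize Lam) (kron (mconj X) Y *\<^sub>v vectorize (1\<^sub>m D))"

lemma identity_fixed: "cp_map D p A (1\<^sub>m D) = 1\<^sub>m D"
  and Lam_carrier: "Lam \<in> carrier_mat D D"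
  and Lam_diagonal: "diagonal_mat Lam"
  and Lam_pos_def: "pos_def_mat D Lam"
  and Lam_trace: "mtrace Lam = 1"
  and Lam_fixed: "cp_dual D p A Lam = Lam"
  using canonical unfolding canonical_form_def by auto

lemma spectral_radius_E: "spectral_radius E = 1"
  and peripheral_E: "\<forall>\<mu>. eigenvalue E \<mu> \<and> cmod \<mu> = 1 \<longrightarrow> \<mu> = 1"
  and simple_one: "Polynomial.order 1 (char_poly E) = 1"
  using injective unfolding injective_mps_def Let_def by auto

lemma dim_pos: "0 < D"
  using Lam_trace Lam_carrier by (cases D) (auto simp: mtrace_def)

lemma P_carrier: "P \<in> carrier_mat (D*D) (D*D)"
  by (intro ketbra_carrier vectorize_carrier one_carrier_mat Lam_carrier)

lemma E_mult_P: "E * P = P"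
  by (rule transfer_matrix_mult_ketbra_identity[OF tensor_carrier identity_fixed])

lemma P_mult_E: "P * E = P"
  by (rule ketbra_mult_transfer_matrix[OF tensor_carrier Lam_carrier Lam_fixed])

lemma P_idempotent: "P * P = P"
  by (rule ketbra_identity_idempotent[OF Lam_carrier Lam_trace])

lemma lambda2_bounds: "0 \<le> lambda2 E" "lambda2 E < 1"
  using lambda2_nonneg[OF transfer_matrix_carrier]
    lambda2_less_1[OF transfer_matrix_carrier _ _ peripheral_E] dim_pos spectral_radius_E
  by auto

lemma gap_eigenvalue_le_lambda2:
  assumes "eigenvalue (E - P) \<mu>"
  shows "cmod \<mu> \<le> lambda2 E"
proof (cases "\<mu> = 0")
  case False
  from assms obtain v where "eigenvector (E - P) v \<mu>" unfolding eigenvalue_def by auto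
  from eigenvector_minus_idempotent[OF transfer_matrix_carrier P_carrier P_mult_E P_idempotent this False]
  have Pv: "P *\<^sub>v v = 0\<^sub>v (D*D)" and ev: "eigenvector E v \<mu>" by auto
  have v: "v \<in> carrier_vec (D*D)" "v \<noteq> 0\<^sub>v (D*D)" and Ev: "E *\<^sub>v v = \<mu> \<cdot>\<^sub>v v"
    using ev transfer_matrix_carrier[of D p A] unfolding eigenvector_def by auto
  let ?u = "vectorize (1\<^sub>m D)" and ?w = "vectorize Lam"
  have u: "?u \<in> carrier_vec (D*D)" by (rule vectorize_carrier[OF one_carrier_mat])
  have w: "?w \<in> carrier_vec (D*D)" by (rule vectorize_carrier[OF Lam_carrier])
  have "\<mu> \<noteq> 1"
  proof
    assume "\<mu> = 1"
    then have Ev1: "E *\<^sub>v v = v" using Ev v by simp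
    have Eu: "E *\<^sub>v ?u = ?u"
      by (simp add: transfer_matrix_mult_vectorize[OF tensor_carrier one_carrier_mat] identity_fixed)
    have wu: "(\<Sum>k<D*D. cnj (?w $ k) * ?u $ k) = 1"
      using braket_vectorize_one[OF Lam_carrier] Lam_trace Lam_carrier by (simp add: braket_def)
    have "(\<Sum>k<D*D. cnj (?w $ k) * v $ k) \<noteq> 0"
      by (rule functional_nonzero_on_fixed_vector[OF transfer_matrix_carrier simple_one u Eu wu v(1) Ev1 v(2)])
    moreover have "braket ?w v \<cdot>\<^sub>v ?u = 0\<^sub>v (D*D)"
      using Pv ketbra_mult_vec[OF w v(1)] by simp
    then have "(braket ?w v \<cdot>\<^sub>v ?u) $ 0 = 0" using dim_pos by simp
    then have "braket ?w v * ?u $ 0 = 0" using dim_pos by simp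
    then have "braket ?w v = 0" using dim_pos by (simp add: vectorize_entry[OF one_carrier_mat])
    ultimately show False using Lam_carrier by (simp add: braket_def)
  qed
  then show ?thesis using eigenvalue_le_lambda2[OF transfer_matrix_carrier] ev
    unfolding eigenvalue_def by blast
qed (use lambda2_bounds in simp)

lemma gap_power_decay:
  "\<exists>c N. 0 \<le> c \<and> (\<forall>n\<ge>N. norm_bound ((E - P) ^\<^sub>m n) (c * sqrt (lambda2 E) ^ n))"
  using dim_pos
  by (intro power_norm_bound_sqrt[OF minus_carrier_mat[OF P_carrier] _ lambda2_bounds
        gap_eigenvalue_le_lambda2]) simp

lemma mps_inner_decomposition:
  assumes n: "n \<ge> 1" and X: "X \<in> carrier_mat D D" and Y: "Y \<in> carrier_mat D D"
  shows "mps_inner p A n X Y = overlap X Y + mtrace ((E - P) ^\<^sub>m n * kron (mconj X) Y)"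
proof -
  let ?K = "kron (mconj X) Y"
  have K: "?K \<in> carrier_mat (D*D) (D*D)" by (rule kron_mconj_carrier[OF X Y])
  have En: "E ^\<^sub>m n \<in> carrier_mat (D*D) (D*D)" using transfer_matrix_carrier by simp
  have "mtrace ((E - P) ^\<^sub>m n * ?K) = mtrace (E ^\<^sub>m n * ?K - P * ?K)"
    by (simp add: power_minus_idempotent[OF transfer_matrix_carrier P_carrier E_mult_P P_mult_E P_idempotent n]
        minus_mult_distrib_mat[OF En P_carrier K])
  also have "\<dots> = mps_inner p A n X Y - overlap X Y"
    using En P_carrier K
    by (simp add: mtrace_minus[of _ "D*D"] mps_inner_eq_mtrace[OF tensor_carrier X Y]
        mtrace_ketbra_mult[OF vectorize_carrier[OF one_carrier_mat] vectorize_carrier[OF Lam_carrier] K])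
  finally show ?thesis by simp
qed

lemma overlap_self_bound:
  "\<exists>lm>0. \<forall>X. X \<in> carrier_mat D D \<longrightarrow> lm * (frob_norm X)\<^sup>2 \<le> Re (overlap X X)"
proof -
  define lm where "lm = Min ((\<lambda>d. Re (Lam $$ (d,d))) ` {..<D})"
  have "lm \<le> Re (Lam $$ (d,d))" if "d < D" for d
    unfolding lm_def using that by (intro Min_le) auto
  moreover have "lm > 0"
    unfolding lm_def using dim_pos pos_def_mat_diag_pos[OF Lam_pos_def] by (subst Min_gr_iff) auto
  ultimately show ?thesis using overlap_self_lower_bound[OF _ Lam_carrier Lam_diagonal] by blast
qed

lemma mps_inner_approx:
  "\<exists>c N. 0 \<le> c \<and> (\<forall>n\<ge>N. \<forall>X Y. X \<in> carrier_mat D D \<longrightarrow> Y \<in> carrier_mat D D \<longrightarrow>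
     cmod (mps_inner p A n X Y - overlap X Y) \<le> c * sqrt (lambda2 E) ^ n * frob_norm X * frob_norm Y)"
proof -
  obtain c N where c: "0 \<le> c"
    and decay: "\<And>n. n \<ge> N \<Longrightarrow> norm_bound ((E - P) ^\<^sub>m n) (c * sqrt (lambda2 E) ^ n)"
    using gap_power_decay by blast
  have F: "E - P \<in> carrier_mat (D*D) (D*D)" by (rule minus_carrier_mat[OF P_carrier])
  have "cmod (mps_inner p A n X Y - overlap X Y)
      \<le> real (D*D) * real (D*D) * c * sqrt (lambda2 E) ^ n * frob_norm X * frob_norm Y"
    if n: "n \<ge> max N 1" and X: "X \<in> carrier_mat D D" and Y: "Y \<in> carrier_mat D D" for n X Y
  proof -
    have "mps_inner p A n X Y - overlap X Y = mtrace ((E - P) ^\<^sub>m n * kron (mconj X) Y)"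
      using mps_inner_decomposition[OF _ X Y, of n] n by simp
    moreover have "cmod (mtrace ((E - P) ^\<^sub>m n * kron (mconj X) Y))
        \<le> real (D*D) * real (D*D) * (c * sqrt (lambda2 E) ^ n) * frob_norm X * frob_norm Y"
      using F n by (intro mtrace_mult_kron_bound[OF X Y] decay) auto
    ultimately show ?thesis by (simp add: mult_ac)
  qed
  moreover have "0 \<le> real (D*D) * real (D*D) * c" using c by simp
  ultimately show ?thesis by blast
qed

lemma normalized_frob_norm_bounded:
  "\<exists>K N. \<forall>n\<ge>N. \<forall>X. X \<in> carrier_mat D D \<and> mps_inner p A n X X = 1 \<longrightarrow> frob_norm X \<le> K"
proof -
  let ?t = "sqrt (lambda2 E)"
  obtain lm where lm: "lm > 0"
    and lower: "\<And>X. X \<in> carrier_mat D D \<Longrightarrow> lm * (frob_norm X)\<^sup>2 \<le> Re (overlap X X)"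
    using overlap_self_bound by blast
  obtain c N0 where approx: "\<And>n X Y. n \<ge> N0 \<Longrightarrow> X \<in> carrier_mat D D \<Longrightarrow> Y \<in> carrier_mat D D \<Longrightarrow>
      cmod (mps_inner p A n X Y - overlap X Y) \<le> c * ?t ^ n * frob_norm X * frob_norm Y"
    using mps_inner_approx by blast
  have "(\<lambda>n. c * ?t ^ n) \<longlonglongrightarrow> c * 0"
    using lambda2_bounds by (intro tendsto_mult_left LIMSEQ_power_zero) simp
  then have "eventually (\<lambda>n. c * ?t ^ n < lm / 2) sequentially"
    using lm by (intro order_tendstoD(2)) auto
  then obtain N1 where small: "\<And>n. n \<ge> N1 \<Longrightarrow> c * ?t ^ n < lm / 2"
    unfolding eventually_sequentially by auto
  have "frob_norm X \<le> sqrt (2 / lm)"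
    if n: "n \<ge> max N0 N1" and X: "X \<in> carrier_mat D D" and normed: "mps_inner p A n X X = 1" for n X
  proof -
    have "lm * (frob_norm X)\<^sup>2 \<le> Re (mps_inner p A n X X) + cmod (mps_inner p A n X X - overlap X X)"
      using lower[OF X] abs_Re_le_cmod[of "mps_inner p A n X X - overlap X X"] by simp
    also have "\<dots> \<le> 1 + c * ?t ^ n * (frob_norm X)\<^sup>2"
      using approx[OF _ X X, of n] normed n by (simp add: power2_eq_square mult.assoc)
    also have "\<dots> \<le> 1 + lm / 2 * (frob_norm X)\<^sup>2"
      using small[of n] n by (intro add_left_mono mult_right_mono) auto
    finally have "(frob_norm X)\<^sup>2 \<le> 2 / lm" using lm by (simp add: field_simps)
    then show ?thesis by (rule real_le_rsqrt)
  qed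
  then show ?thesis by blast
qed

lemma orthogonal_overlap_bound:
  "\<exists>c N. 0 \<le> c \<and> (\<forall>n\<ge>N. \<forall>X Y.
     X \<in> carrier_mat D D \<and> Y \<in> carrier_mat D D \<and> mps_inner p A n X Y = 0 \<longrightarrow>
     cmod (overlap X Y) \<le> c * lambda2 E powr (real n / 2) * frob_norm X * frob_norm Y)"
proof -
  obtain c N where c: "0 \<le> c" and approx: "\<And>n X Y. n \<ge> N \<Longrightarrow> X \<in> carrier_mat D D \<Longrightarrow>
      Y \<in> carrier_mat D D \<Longrightarrow>
      cmod (mps_inner p A n X Y - overlap X Y) \<le> c * sqrt (lambda2 E) ^ n * frob_norm X * frob_norm Y"
    using mps_inner_approx by blast
  have "cmod (overlap X Y) \<le> c * lambda2 E powr (real n / 2) * frob_norm X * frob_norm Y"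
    if n: "n \<ge> max N 1" and X: "X \<in> carrier_mat D D" and Y: "Y \<in> carrier_mat D D"
      and orth: "mps_inner p A n X Y = 0" for n X Y
    using approx[OF _ X Y, of n] n orth powr_half_eq_sqrt_power[OF lambda2_bounds(1), of n] by simp
  then show ?thesis using c by blast
qed

end

theorem lemma7:
  fixes D p :: nat and A :: "nat \<Rightarrow> complex mat" and Lam :: "complex mat"
  assumes "\<forall>i<p. A i \<in> carrier_mat D D"
    and "injective_mps D p A"
    and "canonical_form D p A Lam"
  shows "\<exists>C N. \<forall>n\<ge>N. \<forall>X Y.
           X \<in> carrier_mat D D \<and> Y \<in> carrier_mat D D \<and>
           mps_inner p A n X X = 1 \<and> mps_inner p A n Y Y = 1 \<and> mps_inner p A n X Y = 0 \<longrightarrow>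
           frob_norm X \<le> C \<and> frob_norm Y \<le> C \<and>
           cmod (braket (vectorize Lam) (kron (mconj X) Y *\<^sub>v vectorize (1\<^sub>m D)))
             \<le> C * lambda2 (transfer_matrix D p A) powr (real n / 2) \<and>
           cmod (braket (vectorize Lam) (kron (mconj Y) X *\<^sub>v vectorize (1\<^sub>m D)))
             \<le> C * lambda2 (transfer_matrix D p A) powr (real n / 2)"
proof -
  interpret canonical_injective_mps D p A Lam
    by (rule canonical_injective_mps.intro) (fact assms)+
  obtain K N1 where frob: "\<And>n X. n \<ge> N1 \<Longrightarrow> X \<in> carrier_mat D D \<Longrightarrow> mps_inner p A n X X = 1 \<Longrightarrow>
      frob_norm X \<le> K"
    using normalized_frob_norm_bounded by blast
  obtain c N2 where c: "0 \<le> c" and small: "\<And>n X Y. n \<ge> N2 \<Longrightarrow> X \<in> carrier_mat D D \<Longrightarrow>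
      Y \<in> carrier_mat D D \<Longrightarrow> mps_inner p A n X Y = 0 \<Longrightarrow>
      cmod (overlap X Y) \<le> c * lambda2 E powr (real n / 2) * frob_norm X * frob_norm Y"
    using orthogonal_overlap_bound by blast
  define C where "C = max K (c * K * K)"
  have overlap_le: "cmod (overlap U V) \<le> C * lambda2 E powr (real n / 2)"
    if n: "n \<ge> N2" and U: "U \<in> carrier_mat D D" and V: "V \<in> carrier_mat D D"
      and orth: "mps_inner p A n U V = 0" and fU: "frob_norm U \<le> K" and fV: "frob_norm V \<le> K"
    for n U V
  proof -
    have "c * frob_norm U * frob_norm V \<le> c * K * K"
      using c fU fV frob_norm_nonneg[of U] frob_norm_nonneg[of V]
      by (intro mult_mono mult_left_mono) auto
    also have "\<dots> \<le> C" unfolding C_def by simp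
    finally have "c * frob_norm U * frob_norm V * lambda2 E powr (real n / 2)
        \<le> C * lambda2 E powr (real n / 2)"
      by (rule mult_right_mono) simp
    moreover have "c * lambda2 E powr (real n / 2) * frob_norm U * frob_norm V
        = c * frob_norm U * frob_norm V * lambda2 E powr (real n / 2)"
      by (simp add: mult_ac)
    ultimately show ?thesis using small[OF n U V orth] by linarith
  qed
  show ?thesis
  proof (intro exI[of _ C] exI[of _ "max N1 N2"] allI impI)
    fix n X Y
    assume n: "max N1 N2 \<le> n" and h: "X \<in> carrier_mat D D \<and> Y \<in> carrier_mat D D \<and>
      mps_inner p A n X X = 1 \<and> mps_inner p A n Y Y = 1 \<and> mps_inner p A n X Y = 0"
    then have fX: "frob_norm X \<le> K" and fY: "frob_norm Y \<le> K" using frob by auto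
    have "mps_inner p A n Y X = 0" using h mps_inner_commute[of p A n Y X] by simp
    then show "frob_norm X \<le> C \<and> frob_norm Y \<le> C \<and>
        cmod (overlap X Y) \<le> C * lambda2 E powr (real n / 2) \<and>
        cmod (overlap Y X) \<le> C * lambda2 E powr (real n / 2)"
      using overlap_le[of n X Y] overlap_le[of n Y X] h n fX fY unfolding C_def by auto
  qed
qed

end
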